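(* Suppose that $f$ is continuously differentiable with $\nabla f$ Lipschitz continuous with constant $L_{\nabla f}$. Then, for every iteration $k$ of CLARSTA, the model $\widehat m_k$ belongs to a class of $(\mathcal{C},\boldsymbol{Q}_k)$-fully linear models of $f$ at $\boldsymbol{x}_k$ parameterized by $\Delta_k\in(0,\Delta_{\max}]$, with constants $$\kappa_{ef}=\left(\tfrac12L_{\nabla f}\left(1+\sqrt{p}M_{\widehat{\boldsymbol{R}}^{-1}}\right)\right)\epsilon_{\mathrm{rad}}^2,\qquad\kappa_{eg}=\left(\tfrac12L_{\nabla f}\left(2+\sqrt{p}M_{\widehat{\boldsymbol{R}}^{-1}}\right)\right)\epsilon_{\mathrm{rad}},$$ where $M_{\widehat{\boldsymbol{R}}^{-1}}=\max\{1/\epsilon_{\mathrm{geo}},1/\Delta_{\min}\}\epsilon_{\mathrm{rad}}\Delta_{\max}$; that is, for all $\widehat{\boldsymbol{s}}\in\boldsymbol{Q}_k^\top(\mathcal{C}-\boldsymbol{x}_k)$ with $\|\widehat{\boldsymbol{s}}\|\le\Delta_k$, $|f(\boldsymbol{x}_k+\boldsymbol{Q}_k\widehat{\boldsymbol{s}})-\widehat m_k(\widehat{\boldsymbol{s}})|\le\kappa_{ef}\Delta_k^2$ and $\max_{\boldsymbol{d}\in\boldsymbol{Q}_k^\top(\mathcal{C}-\boldsymbol{x}_k),\|\boldsymbol{d}\|\le1}|(\boldsymbol{Q}_k^\top\nabla f(\boldsymbol{x}_k+\boldsymbol{Q}_k\widehat{\boldsymbol{s}})-\nabla\widehat m_k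(\widehat{\boldsymbol{s}}))^\top\boldsymbol{d}|\le\kappa_{eg}\Delta_k$.
   Context: Problem: minimize $f:\mathbb{R}^n\to\mathbb{R}$ over $\mathcal{C}\subseteq\mathbb{R}^n$, closed convex with nonempty interior. $\|\cdot\|$ Euclidean/spectral norm; $\mathrm{proj}_{\mathcal{C}}$ Euclidean projection; $\sigma_{\min}$ smallest singular value. QR-factorizations $\boldsymbol{D}=\boldsymbol{Q}\boldsymbol{R}$ of full-column-rank $\boldsymbol{D}\in\mathbb{R}^{n\times p}$ have $\boldsymbol{Q}$ with orthonormal columns and invertible $\boldsymbol{R}$. $\boldsymbol{Q}^\top(\mathcal{C}-\boldsymbol{x})=\{\boldsymbol{Q}^\top(\boldsymbol{z}-\boldsymbol{x}):\boldsymbol{z}\in\mathcal{C}\}$. Algorithm CLARSTA. Parameters: integers $1\le p_{\mathrm{rand}}\le p\le n$; $\boldsymbol{x}_0\in\mathcal{C}$; $\Delta_0>0$; $0<\Delta_{\min}\le\Delta_{\max}$; $\gamma_{\mathrm{dec}}\in(0,1)$; $\gamma_{\mathrm{inc}}^k\ge1$; $0<\eta_1\le\eta_2<1$; $\mu>0$; $\epsilon_{\mathrm{rad}}\ge1$; $\epsilon_{\mathrm{geo}}>0$. GEN$(q,\Delta,\boldsymbol{Q})$ ($\boldsymbol{Q}$ optional, orthonormal columns): draw $\boldsymbol{A}\in\mathbb{R}^{n\times q}$ with i.i.d. $\mathcal{N}(0,1)$ entries, of full column rank; $\widetilde{\boldsymbol{A}}=\boldsymbol{A}-\boldsymbol{Q}\boldsymbol{Q}^\top\boldsymbol{A}$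 if $\boldsymbol{Q}$ given, else $\boldsymbol{A}$; QR $\widetilde{\boldsymbol{A}}=[\widetilde{\boldsymbol{q}}_1\cdots\widetilde{\boldsymbol{q}}_q]\widetilde{\boldsymbol{R}}$; return $\Delta\widetilde{\boldsymbol{q}}_1,\dots,\Delta\widetilde{\boldsymbol{q}}_q$. REMOVE$(\boldsymbol{D}^U,\Delta,r)$: repeat $r$ times: for $\boldsymbol{D}^U=[\boldsymbol{d}_1\cdots\boldsymbol{d}_m]$ let $\boldsymbol{M}_i$ be $\boldsymbol{D}^U$ without column $i$, $\theta_i=\sigma_{\min}(\boldsymbol{M}_i)\max(\|\boldsymbol{d}_i\|^4/\Delta^4,1)$; delete the column with largest $\theta_i$. Initialization: $\boldsymbol{D}_0$ = columns GEN$(p,\Delta_0)$. Iteration $k$: QR $\boldsymbol{D}_k=[\boldsymbol{d}_1\cdots\boldsymbol{d}_p]=\boldsymbol{Q}_k\boldsymbol{R}_k$, $\boldsymbol{R}_k=[\boldsymbol{r}_1\cdots\boldsymbol{r}_p]$; $\widehat f_k(\widehat{\boldsymbol{s}})=f(\boldsymbol{x}_k+\boldsymbol{Q}_k\widehat{\boldsymbol{s}})$; $\widehat m_k(\widehat{\boldsymbol{s}})=\widehat f_k(\boldsymbol{0}_p)+\boldsymbol{g}_k^\top\widehat{\boldsymbol{s}}$, $\boldsymbol{g}_k=(\boldsymbol{R}_k^\top)^{-1}\boldsymbol{\delta}_k$, $(\boldsymbol{\delta}_k)_i=\widehat f_k(\boldsymbol{r}_i)-\widehat f_k(\boldsymbol{0}_p)$;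 $\pi^m(\boldsymbol{x}_k)=\left|\min_{\boldsymbol{d}\in\boldsymbol{Q}_k^\top(\mathcal{C}-\boldsymbol{x}_k),\|\boldsymbol{d}\|\le1}\nabla\widehat m_k(\boldsymbol{0}_p)^\top\boldsymbol{d}\right|$. If $\Delta_k\le\mu\pi^m(\boldsymbol{x}_k)$: approximately solve $\min\{\widehat m_k(\widehat{\boldsymbol{s}}):\widehat{\boldsymbol{s}}\in\boldsymbol{Q}_k^\top\mathcal{C},\|\widehat{\boldsymbol{s}}\|\le\Delta_k\}$ giving $\widehat{\boldsymbol{s}}_k$; $\boldsymbol{s}_k=\mathrm{proj}_{\mathcal{C}}(\boldsymbol{x}_k+\boldsymbol{Q}_k\widehat{\boldsymbol{s}}_k)-\boldsymbol{x}_k$; $\rho_k=\frac{f(\boldsymbol{x}_k)-f(\boldsymbol{x}_k+\boldsymbol{s}_k)}{\widehat m_k(\boldsymbol{0}_p)-\widehat m_k(\widehat{\boldsymbol{s}}_k)}$; $\Delta_{k+1}=\gamma_{\mathrm{dec}}\Delta_k$ if $\rho_k<\eta_1$, $\min(\gamma^k_{\mathrm{inc}}\Delta_k,\Delta_{\max})$ if $\rho_k>\eta_2$, $\Delta_k$ otherwise; $\boldsymbol{x}_{k+1}$ any point of $\mathcal{C}$ with $f(\boldsymbol{x}_{k+1})\le\min(\{f(\boldsymbol{x}_k+\boldsymbol{s}_k)\}\cup\{f(\boldsymbol{x}_k+\boldsymbol{d}_i+\boldsymbol{d}_j):\boldsymbol{x}_k+\boldsymbol{d}_i+\boldsymbol{d}_j\in\mathcal{C},\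 \boldsymbol{d}_i,\boldsymbol{d}_j\text{ columns of }[\boldsymbol{0}_n\ \boldsymbol{D}_k]\})$; $\boldsymbol{D}^U_{k+1}$: select $p$ linearly independent directions among $\boldsymbol{x}_k+\boldsymbol{s}_k-\boldsymbol{x}_{k+1}$ and $\boldsymbol{x}_k+\boldsymbol{d}_i+\boldsymbol{d}_j-\boldsymbol{x}_{k+1}$, apply REMOVE$(\cdot,\Delta_{k+1},p_{\mathrm{rand}})$, delete columns of norm $>\epsilon_{\mathrm{rad}}\Delta_{k+1}$, while nonempty with $\sigma_{\min}<\epsilon_{\mathrm{geo}}$ apply REMOVE$(\cdot,\Delta_{k+1},1)$, optionally remove more by REMOVE; with $p_1$ remaining columns, $\boldsymbol{D}^R_{k+1}$ = GEN$(p-p_1,\Delta_{k+1},$ orthonormal basis of column space of $\boldsymbol{D}^U_{k+1})$, $\boldsymbol{D}_{k+1}=[\boldsymbol{D}^U_{k+1}\ \boldsymbol{D}^R_{k+1}]$. Otherwise: $\Delta_{k+1}=\gamma_{\mathrm{dec}}\Delta_k$, $\boldsymbol{x}_{k+1}=\boldsymbol{x}_k$, $\boldsymbol{D}_{k+1}=\gamma_{\mathrm{dec}}\boldsymbol{D}_k$. Stop if $\Delta_{k+1}<\Delta_{\min}$. Definition: given $\overline\Delta>0$, $\boldsymbol{x}\in\mathcal{C}$, continuously differentiable $f$ and $\boldsymbol{Q}\in\mathbb{R}^{n\times p}$ with orthonormal columns, a family $\{\widehat m_\Delta\}_{\Delta\in(0,\overline\Delta]}$ of functions $\mathbb{R}^p\to\mathbb{R}$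 is a class of $(\mathcal{C},\boldsymbol{Q})$-fully linear models of $f$ at $\boldsymbol{x}$ parameterized by $\Delta$ if there are $\kappa_{ef},\kappa_{eg}>0$ with, for all $\Delta\in(0,\overline\Delta]$ and $\widehat{\boldsymbol{s}}\in\boldsymbol{Q}^\top(\mathcal{C}-\boldsymbol{x})$, $\|\widehat{\boldsymbol{s}}\|\le\Delta$: $|f(\boldsymbol{x}+\boldsymbol{Q}\widehat{\boldsymbol{s}})-\widehat m_\Delta(\widehat{\boldsymbol{s}})|\le\kappa_{ef}\Delta^2$ and $\max_{\boldsymbol{d}\in\boldsymbol{Q}^\top(\mathcal{C}-\boldsymbol{x}),\|\boldsymbol{d}\|\le1}|(\boldsymbol{Q}^\top\nabla f(\boldsymbol{x}+\boldsymbol{Q}\widehat{\boldsymbol{s}})-\nabla\widehat m_\Delta(\widehat{\boldsymbol{s}}))^\top\boldsymbol{d}|\le\kappa_{eg}\Delta$. *)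

theory Defs
  imports "HOL-Analysis.Analysis"
begin

(* ---------- finite families of vectors (lists = n x q matrices given by columns) ---------- *)

definition lin_indep_list :: "('a::real_vector) list \<Rightarrow> bool" where
  "lin_indep_list vs \<longleftrightarrow>
     (\<forall>c::nat \<Rightarrow> real. (\<Sum>i<length vs. c i *\<^sub>R vs ! i) = 0 \<longrightarrow> (\<forall>i<length vs. c i = 0))"

definition orthonormal_list :: "('a::real_inner) list \<Rightarrow> bool" where
  "orthonormal_list vs \<longleftrightarrow>
     (\<forall>i<length vs. \<forall>j<length vs. inner (vs ! i) (vs ! j) = (if i = j then 1 else 0))"

definition sq_invertible :: "nat \<Rightarrow> (nat \<Rightarrow> nat \<Rightarrow> real) \<Rightarrow> bool" where
  "sq_invertible q R \<longleftrightarrow> (\<exists>Ri. \<forall>i<q. \<forall>j<q.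
      (\<Sum>l<q. R i l * Ri l j) = (if i = j then 1 else 0) \<and>
      (\<Sum>l<q. Ri i l * R l j) = (if i = j then 1 else 0))"

definition sigma_min :: "('a::real_normed_vector) list \<Rightarrow> real" where
  "sigma_min vs = Inf {norm (\<Sum>i<length vs. c i *\<^sub>R vs ! i) | c::nat \<Rightarrow> real.
                        (\<Sum>i<length vs. (c i)\<^sup>2) = 1}"

(* ---------- GEN(q, Delta, Q):  U = list of orthonormal columns of Q ([] if Q not given) ---------- *)

definition gen :: "nat \<Rightarrow> real \<Rightarrow> ('a::euclidean_space) list \<Rightarrow> 'a list \<Rightarrow> bool" where
  "gen q \<Delta> U out \<longleftrightarrow> (\<exists>A Qt Rt.
      length A = q \<and> lin_indep_list A \<and>
      length Qt = q \<and> orthonormal_list Qt \<and> sq_invertible q Rt \<and>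
      (\<forall>j<q. A ! j - (\<Sum>u\<leftarrow>U. inner u (A ! j) *\<^sub>R u) = (\<Sum>i<q. Rt i j *\<^sub>R Qt ! i)) \<and>
      out = map (\<lambda>v. \<Delta> *\<^sub>R v) Qt)"

definition del_nth :: "nat \<Rightarrow> 'a list \<Rightarrow> 'a list" where
  "del_nth i vs = take i vs @ drop (Suc i) vs"

definition remove_theta :: "real \<Rightarrow> ('a::real_normed_vector) list \<Rightarrow> nat \<Rightarrow> real" where
  "remove_theta \<Delta> vs i = sigma_min (del_nth i vs) * max (norm (vs ! i) ^ 4 / \<Delta> ^ 4) 1"

(* one deletion step of REMOVE (any maximiser of theta may be deleted; no-op on the empty list) *)
definition remove_one :: "real \<Rightarrow> ('a::real_normed_vector) list \<Rightarrow> 'a list \<Rightarrow> bool" where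
  "remove_one \<Delta> vs vs' \<longleftrightarrow>
     (vs = [] \<and> vs' = []) \<or>
     (\<exists>i<length vs. (\<forall>j<length vs. remove_theta \<Delta> vs j \<le> remove_theta \<Delta> vs i) \<and>
                     vs' = del_nth i vs)"

definition remove_rel :: "real \<Rightarrow> nat \<Rightarrow> ('a::real_normed_vector) list \<Rightarrow> 'a list \<Rightarrow> bool" where
  "remove_rel \<Delta> r vs vs' \<longleftrightarrow> (\<exists>sq::nat \<Rightarrow> 'a list. sq 0 = vs \<and> sq r = vs' \<and>
      (\<forall>t<r. remove_one \<Delta> (sq t) (sq (Suc t))))"

definition remove_while :: "real \<Rightarrow> real \<Rightarrow> ('a::real_normed_vector) list \<Rightarrow> 'a list \<Rightarrow> bool" where
  "remove_while \<epsilon>geo \<Delta> vs vs' \<longleftrightarrow> (\<exists>(sq::nat \<Rightarrow> 'a list) m. sq 0 = vs \<and> sq m = vs' \<and>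
      (\<forall>t<m. sq t \<noteq> [] \<and> sigma_min (sq t) < \<epsilon>geo \<and> remove_one \<Delta> (sq t) (sq (Suc t))) \<and>
      (vs' = [] \<or> \<epsilon>geo \<le> sigma_min vs'))"

(* ---------- matrices with p columns (p = CARD('p)) ---------- *)

definition cols_are :: "real^'p^'n \<Rightarrow> (real^'n) list \<Rightarrow> bool" where
  "cols_are D cs \<longleftrightarrow> (\<exists>e::'p \<Rightarrow> nat. bij_betw e UNIV {..<length cs} \<and>
                         (\<forall>j. column j D = cs ! e j))"

definition is_QR :: "real^'p^'n \<Rightarrow> real^'p^'n \<Rightarrow> real^'p^'p \<Rightarrow> bool" where
  "is_QR D Q R \<longleftrightarrow> D = Q ** R \<and> transpose Q ** Q = mat 1 \<and> invertible R"

definition proj_set :: "real^'p^'n \<Rightarrow> (real^'n) set \<Rightarrow> real^'n \<Rightarrow> (real^'p) set" where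
  "proj_set Q C x = {transpose Q *v (z - x) | z. z \<in> C}"

definition model_delta :: "(real^'n \<Rightarrow> real) \<Rightarrow> real^'n \<Rightarrow> real^'p^'n \<Rightarrow> real^'p^'p \<Rightarrow> real^'p" where
  "model_delta f x Q R = (\<chi> i. f (x + Q *v column i R) - f x)"

definition model_grad :: "(real^'n \<Rightarrow> real) \<Rightarrow> real^'n \<Rightarrow> real^'p^'n \<Rightarrow> real^'p^'p \<Rightarrow> real^'p" where
  "model_grad f x Q R = matrix_inv (transpose R) *v model_delta f x Q R"

(* \<hat>m_k(\<hat>s) = \<hat>f_k(0) + g_k^T \<hat>s ; its gradient is the constant g_k *)
definition model :: "(real^'n \<Rightarrow> real) \<Rightarrow> real^'n \<Rightarrow> real^'p^'n \<Rightarrow> real^'p^'p \<Rightarrow> real^'p \<Rightarrow> real" where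
  "model f x Q R s = f (x + Q *v 0) + inner (model_grad f x Q R) s"

definition crit_meas :: "(real^'n \<Rightarrow> real) \<Rightarrow> (real^'n) set \<Rightarrow> real^'n \<Rightarrow> real^'p^'n \<Rightarrow> real^'p^'p \<Rightarrow> real" where
  "crit_meas f C x Q R = \<bar>Inf {inner (model_grad f x Q R) d | d. d \<in> proj_set Q C x \<and> norm d \<le> 1}\<bar>"

definition clarsta_step ::
  "(real^'n \<Rightarrow> real) \<Rightarrow> (real^'n) set \<Rightarrow> nat \<Rightarrow> real \<Rightarrow> real \<Rightarrow> (nat \<Rightarrow> real) \<Rightarrow>
   real \<Rightarrow> real \<Rightarrow> real \<Rightarrow> real \<Rightarrow> real \<Rightarrow> real \<Rightarrow> nat \<Rightarrow>
   real^'n \<Rightarrow> real \<Rightarrow> real^'p^'n \<Rightarrow> real^'n \<Rightarrow> real \<Rightarrow> real^'p^'n \<Rightarrow> bool" where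
  "clarsta_step f C prand \<Delta>max \<gamma>dec \<gamma>inc \<eta>1 \<eta>2 \<mu> \<epsilon>rad \<epsilon>geo \<Delta>min k x \<Delta> D x' \<Delta>' D' \<longleftrightarrow>
    (\<exists>Q R. is_QR D Q R \<and>
      (if \<Delta> \<le> \<mu> * crit_meas f C x Q R then
        (\<exists>sh::real^'p. norm sh \<le> \<Delta> \<and>
          (let s = closest_point C (x + Q *v sh) - x;
               \<rho> = (f x - f (x + s)) / (model f x Q R 0 - model f x Q R sh);
               dirs = insert 0 (range (\<lambda>i. column i D));
               trial = {x + a + b | a b. a \<in> dirs \<and> b \<in> dirs \<and> x + a + b \<in> C}
           in \<Delta>' = (if \<rho> < \<eta>1 then \<gamma>dec * \<Delta>
                    else if \<rho> > \<eta>2 then min (\<gamma>inc k * \<Delta>) \<Delta>max else \<Delta>) \<and>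
              x' \<in> C \<and> f x' \<le> f (x + s) \<and> (\<forall>y\<in>trial. f x' \<le> f y) \<and>
              (\<exists>DU0 DU1 DU2 DU3 U DR.
                 length DU0 \<le> CARD('p) \<and> lin_indep_list DU0 \<and>
                 set DU0 \<subseteq> (\<lambda>y. y - x') ` (insert (x + s) trial) \<and>
                 remove_rel \<Delta>' prand DU0 DU1 \<and>
                 remove_while \<epsilon>geo \<Delta>' (filter (\<lambda>d. norm d \<le> \<epsilon>rad * \<Delta>') DU1) DU2 \<and>
                 (\<exists>r. remove_rel \<Delta>' r DU2 DU3) \<and>
                 orthonormal_list U \<and> span (set U) = span (set DU3) \<and>
                 gen (CARD('p) - length DU3) \<Delta>' U DR \<and>
                 cols_are D' (DU3 @ DR))))
      else \<Delta>' = \<gamma>dec * \<Delta> \<and> x' = x \<and> D' = \<gamma>dec *\<^sub>R D)) \<and>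
    \<Delta>min \<le> \<Delta>'"

(* reachable iterations: (k, x_k, Delta_k, D_k) is an iteration of some run of CLARSTA
   (all random draws / approximate solutions / free choices taken arbitrarily) *)
inductive clarsta_iter ::
  "(real^'n \<Rightarrow> real) \<Rightarrow> (real^'n) set \<Rightarrow> nat \<Rightarrow> real^'n \<Rightarrow> real \<Rightarrow> real \<Rightarrow> real \<Rightarrow> real \<Rightarrow>
   (nat \<Rightarrow> real) \<Rightarrow> real \<Rightarrow> real \<Rightarrow> real \<Rightarrow> real \<Rightarrow> real \<Rightarrow>
   nat \<Rightarrow> real^'n \<Rightarrow> real \<Rightarrow> real^'p^'n \<Rightarrow> bool"
  for f C prand x0 \<Delta>0 \<Delta>min \<Delta>max \<gamma>dec \<gamma>inc \<eta>1 \<eta>2 \<mu> \<epsilon>rad \<epsilon>geo where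
  init: "gen CARD('p) \<Delta>0 [] cs \<Longrightarrow> cols_are D0 cs \<Longrightarrow>
         clarsta_iter f C prand x0 \<Delta>0 \<Delta>min \<Delta>max \<gamma>dec \<gamma>inc \<eta>1 \<eta>2 \<mu> \<epsilon>rad \<epsilon>geo 0 x0 \<Delta>0 D0"
| step: "clarsta_iter f C prand x0 \<Delta>0 \<Delta>min \<Delta>max \<gamma>dec \<gamma>inc \<eta>1 \<eta>2 \<mu> \<epsilon>rad \<epsilon>geo k x \<Delta> D \<Longrightarrow>
         clarsta_step f C prand \<Delta>max \<gamma>dec \<gamma>inc \<eta>1 \<eta>2 \<mu> \<epsilon>rad \<epsilon>geo \<Delta>min k x \<Delta> D x' \<Delta>' D' \<Longrightarrow>
         clarsta_iter f C prand x0 \<Delta>0 \<Delta>min \<Delta>max \<gamma>dec \<gamma>inc \<eta>1 \<eta>2 \<mu> \<epsilon>rad \<epsilon>geo (Suc k) x' \<Delta>' D'"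

end

theory Submission
  imports Defs
begin

text \<open>
  The simplex gradient \<open>g = R\<^sup>-\<^sup>T \<delta>\<close> satisfies \<open>R\<^sup>T (g - Q\<^sup>T \<nabla>f(x)) = e\<close>, where \<open>e\<^sub>i\<close> is the
  first-order Taylor remainder of \<open>f\<close> along the \<open>i\<close>-th column of \<open>D = Q R\<close>; with columns of norm
  at most \<open>\<epsilon>rad \<Delta>\<close> this gives \<open>|e| \<le> \<surd>p L/2 (\<epsilon>rad \<Delta>)\<^sup>2\<close>.  Turning this into a bound on
  \<open>g - Q\<^sup>T \<nabla>f(x)\<close> needs \<open>\<epsilon>rad \<Delta> |v| \<le> M |D v|\<close>, and this poisedness is an invariant of
  CLARSTA: the directions kept by an iteration have smallest singular value at least
  \<open>\<epsilon>geo\<close> (which survives further deletions), the fresh ones are \<open>\<Delta>\<close>-scaled orthonormal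
  vectors orthogonal to them, and a criticality step rescales \<open>D\<close> and \<open>\<Delta>\<close> together.
\<close>

section \<open>Taylor bound for Lipschitz gradients\<close>

lemma increment_le_of_deriv_le_linear:
  fixes g g' :: "real \<Rightarrow> real"
  assumes deriv: "\<And>t. 0 \<le> t \<Longrightarrow> t \<le> 1 \<Longrightarrow> (g has_real_derivative g' t) (at t)"
    and bound: "\<And>t. 0 \<le> t \<Longrightarrow> t \<le> 1 \<Longrightarrow> \<bar>g' t\<bar> \<le> 2 * K * t"
  shows "\<bar>g 1 - g 0\<bar> \<le> K"
proof -
  have "K * 0\<^sup>2 + \<sigma> * g 0 \<le> K * 1\<^sup>2 + \<sigma> * g 1" if \<sigma>: "\<bar>\<sigma>\<bar> = 1" for \<sigma> :: real
  proof (rule DERIV_nonneg_imp_nondecreasing[of 0 1, where f = "\<lambda>t. K * t\<^sup>2 + \<sigma> * g t"])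
    fix t :: real assume t: "0 \<le> t" "t \<le> 1"
    have "((\<lambda>t. K * t\<^sup>2 + \<sigma> * g t) has_real_derivative K * (2 * t) + \<sigma> * g' t) (at t)"
      using deriv[OF t] by (auto intro!: derivative_eq_intros)
    moreover have "0 \<le> K * (2 * t) + \<sigma> * g' t"
      using bound[OF t] abs_ge_minus_self[of "\<sigma> * g' t"] \<sigma> by (simp add: abs_mult)
    ultimately show "\<exists>y. ((\<lambda>t. K * t\<^sup>2 + \<sigma> * g t) has_real_derivative y) (at t) \<and> 0 \<le> y"
      by blast
  qed simp
  from this[of 1] this[of "-1"] show ?thesis by (simp add: abs_le_iff)
qed

lemma lipschitz_gradient_taylor_bound:
  fixes f :: "'a::real_inner \<Rightarrow> real"
  assumes grad: "\<And>y. (f has_derivative (\<lambda>h. inner (f' y) h)) (at y)"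
    and lip: "L-lipschitz_on UNIV f'"
  shows "\<bar>f (x + d) - f x - inner (f' x) d\<bar> \<le> L / 2 * (norm d)\<^sup>2"
proof -
  define g where "g t = f (x + t *\<^sub>R d) - t * inner (f' x) d" for t
  have "(g has_real_derivative inner (f' (x + t *\<^sub>R d) - f' x) d) (at t)" for t
  proof -
    have "((\<lambda>t. f (x + t *\<^sub>R d)) has_derivative (\<lambda>h. inner (f' (x + t *\<^sub>R d)) (h *\<^sub>R d))) (at t)"
      by (rule has_derivative_compose[OF _ grad]) (auto intro!: derivative_eq_intros)
    then have "(g has_derivative (\<lambda>h. inner (f' (x + t *\<^sub>R d)) (h *\<^sub>R d) - h * inner (f' x) d)) (at t)"
      unfolding g_def by (auto intro!: derivative_eq_intros)
    then show ?thesis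
      unfolding has_field_derivative_def
      by (rule has_derivative_eq_rhs) (simp add: fun_eq_iff inner_diff_left algebra_simps)
  qed
  moreover have "\<bar>inner (f' (x + t *\<^sub>R d) - f' x) d\<bar> \<le> 2 * (L / 2 * (norm d)\<^sup>2) * t"
    if "0 \<le> t" for t
  proof -
    have "\<bar>inner (f' (x + t *\<^sub>R d) - f' x) d\<bar> \<le> norm (f' (x + t *\<^sub>R d) - f' x) * norm d"
      by (rule Cauchy_Schwarz_ineq2)
    also have "\<dots> \<le> L * norm (t *\<^sub>R d) * norm d"
      using lipschitz_on_normD[OF lip, of "x + t *\<^sub>R d" x] by (simp add: mult_right_mono)
    finally show ?thesis using that by (simp add: power2_eq_square mult_ac)
  qed
  ultimately have "\<bar>g 1 - g 0\<bar> \<le> L / 2 * (norm d)\<^sup>2"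
    by (intro increment_le_of_deriv_le_linear) auto
  then show ?thesis by (simp add: g_def algebra_simps)
qed

section \<open>Lower frame bounds\<close>

text \<open>\<open>s\<close> is a lower bound for the smallest singular value of the matrix with columns \<open>vs\<close>;
  unlike \<^const>\<open>sigma_min\<close>, this form is inherited when columns are deleted.\<close>

definition lower_frame_bound :: "real \<Rightarrow> ('a::real_normed_vector) list \<Rightarrow> bool" where
  "lower_frame_bound s vs \<longleftrightarrow>
     (\<forall>c. s * sqrt (\<Sum>i<length vs. (c i)\<^sup>2) \<le> norm (\<Sum>i<length vs. c i *\<^sub>R vs ! i))"

lemma lower_frame_bound_Nil [simp]: "lower_frame_bound s []"
  by (simp add: lower_frame_bound_def)

lemma lower_frame_bound_sigma_min:
  assumes "s \<le> sigma_min vs"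
  shows "lower_frame_bound s vs"
  unfolding lower_frame_bound_def
proof
  fix c :: "nat \<Rightarrow> real"
  let ?n = "length vs"
  define S where "S = (\<Sum>i<?n. (c i)\<^sup>2)"
  let ?X = "{norm (\<Sum>i<?n. c i *\<^sub>R vs ! i) | c::nat \<Rightarrow> real. (\<Sum>i<?n. (c i)\<^sup>2) = 1}"
  show "s * sqrt S \<le> norm (\<Sum>i<?n. c i *\<^sub>R vs ! i)"
  proof (cases "S = 0")
    case True
    then have "\<forall>i<?n. c i = 0"
      unfolding S_def by (subst (asm) sum_nonneg_eq_0_iff) auto
    then show ?thesis using True by simp
  next
    case False
    then have S: "0 < S" unfolding S_def by (simp add: less_le sum_nonneg)
    have "(\<Sum>i<?n. (c i / sqrt S)\<^sup>2) = 1"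
      using S by (simp add: power_divide flip: sum_divide_distrib S_def)
    then have "norm (\<Sum>i<?n. (c i / sqrt S) *\<^sub>R vs ! i) \<in> ?X"
      by (intro CollectI exI[of _ "\<lambda>i. c i / sqrt S"]) simp
    then have "sigma_min vs \<le> norm (\<Sum>i<?n. (c i / sqrt S) *\<^sub>R vs ! i)"
      unfolding sigma_min_def by (rule cInf_lower) (rule bdd_belowI[of _ 0], auto)
    also have "(\<Sum>i<?n. (c i / sqrt S) *\<^sub>R vs ! i) = (1 / sqrt S) *\<^sub>R (\<Sum>i<?n. c i *\<^sub>R vs ! i)"
      by (simp add: scaleR_sum_right)
    finally have "sigma_min vs * sqrt S \<le> norm (\<Sum>i<?n. c i *\<^sub>R vs ! i)"
      using S by (simp add: pos_le_divide_eq)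
    moreover have "s * sqrt S \<le> sigma_min vs * sqrt S"
      using assms S by (intro mult_right_mono) auto
    ultimately show ?thesis by linarith
  qed
qed

lemma sum_lessThan_skip:
  fixes G :: "nat \<Rightarrow> 'b::comm_monoid_add"
  assumes "i < n" "G i = 0"
  shows "(\<Sum>j<n. G j) = (\<Sum>j<n - 1. G (if j < i then j else Suc j))"
proof -
  let ?h = "\<lambda>j::nat. if j < i then j else Suc j"
  have "bij_betw ?h {..<n - 1} ({..<n} - {i})"
  proof (rule bij_betw_imageI)
    show "inj_on ?h {..<n - 1}" by (auto simp: inj_on_def split: if_splits)
    show "?h ` {..<n - 1} = {..<n} - {i}"
    proof
      show "{..<n} - {i} \<subseteq> ?h ` {..<n - 1}"
      proof
        fix y assume y: "y \<in> {..<n} - {i}"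
        show "y \<in> ?h ` {..<n - 1}"
          using y assms by (cases "y < i") (auto intro!: image_eqI[of _ _ y] image_eqI[of _ _ "y - 1"])
      qed
    qed (use assms in auto)
  qed
  then have "(\<Sum>j<n - 1. G (?h j)) = (\<Sum>j\<in>{..<n} - {i}. G j)"
    by (rule sum.reindex_bij_betw)
  also have "\<dots> = (\<Sum>j<n. G j)"
    using sum.remove[of "{..<n}" i G] assms by simp
  finally show ?thesis by simp
qed

lemma length_del_nth: "i < length vs \<Longrightarrow> length (del_nth i vs) = length vs - 1"
  by (simp add: del_nth_def)

lemma nth_del_nth:
  "i < length vs \<Longrightarrow> j < length vs - 1 \<Longrightarrow> del_nth i vs ! j = vs ! (if j < i then j else Suc j)"
  by (auto simp: del_nth_def nth_append min_def)

lemma set_del_nth_subset: "set (del_nth i vs) \<subseteq> set vs"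
  unfolding del_nth_def using set_take_subset set_drop_subset by fastforce

lemma lower_frame_bound_del_nth:
  assumes bound: "lower_frame_bound s vs" and i: "i < length vs"
  shows "lower_frame_bound s (del_nth i vs)"
  unfolding lower_frame_bound_def
proof
  fix c :: "nat \<Rightarrow> real"
  let ?n = "length vs"
  define c' where "c' j = (if j < i then c j else if j = i then 0 else c (j - 1))" for j
  have c': "c' (if j < i then j else Suc j) = c j" "c' i = 0" for j by (simp_all add: c'_def)
  have "(\<Sum>j<?n. (c' j)\<^sup>2) = (\<Sum>j<?n - 1. (c j)\<^sup>2)"
    using sum_lessThan_skip[OF i, of "\<lambda>j. (c' j)\<^sup>2"] by (simp only: c') simp
  moreover have "(\<Sum>j<?n. c' j *\<^sub>R vs ! j) = (\<Sum>j<?n - 1. c j *\<^sub>R del_nth i vs ! j)"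
    using sum_lessThan_skip[OF i, of "\<lambda>j. c' j *\<^sub>R vs ! j"] i by (simp add: c' nth_del_nth)
  ultimately show "s * sqrt (\<Sum>j<length (del_nth i vs). (c j)\<^sup>2)
      \<le> norm (\<Sum>j<length (del_nth i vs). c j *\<^sub>R del_nth i vs ! j)"
    using bound[unfolded lower_frame_bound_def, rule_format, of c'] i by (simp add: length_del_nth)
qed

lemma remove_one_chain:
  assumes "\<forall>t<m. remove_one \<Delta> (sq t) (sq (Suc t))"
  shows "set (sq m) \<subseteq> set (sq 0) \<and> (lower_frame_bound s (sq 0) \<longrightarrow> lower_frame_bound s (sq m))"
  using assms
proof (induction m)
  case (Suc m)
  have "remove_one \<Delta> (sq m) (sq (Suc m))" using Suc.prems by simp
  then have "set (sq (Suc m)) \<subseteq> set (sq m) \<and>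
      (lower_frame_bound s (sq m) \<longrightarrow> lower_frame_bound s (sq (Suc m)))"
    unfolding remove_one_def using set_del_nth_subset lower_frame_bound_del_nth by fastforce
  then show ?case using Suc by auto
qed simp

lemma remove_rel_lower_frame_bound:
  assumes "remove_rel \<Delta> r vs vs'"
  shows "set vs' \<subseteq> set vs \<and> (lower_frame_bound s vs \<longrightarrow> lower_frame_bound s vs')"
  using assms remove_one_chain unfolding remove_rel_def by metis

lemma remove_while_lower_frame_bound:
  assumes "remove_while \<epsilon> \<Delta> vs vs'"
  shows "set vs' \<subseteq> set vs \<and> lower_frame_bound \<epsilon> vs'"
  using assms remove_one_chain lower_frame_bound_sigma_min lower_frame_bound_Nil
  unfolding remove_while_def by metis

lemma norm_orthonormal_list_nth:
  "orthonormal_list Qt \<Longrightarrow> i < length Qt \<Longrightarrow> norm (Qt ! i) = 1"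
  by (simp add: orthonormal_list_def norm_eq_1)

lemma norm_orthonormal_list_combination:
  assumes "orthonormal_list Qt"
  shows "(norm (\<Sum>i<length Qt. c i *\<^sub>R Qt ! i))\<^sup>2 = (\<Sum>i<length Qt. (c i)\<^sup>2)"
proof -
  let ?n = "length Qt"
  have "(norm (\<Sum>i<?n. c i *\<^sub>R Qt ! i))\<^sup>2 = (\<Sum>i<?n. \<Sum>j<?n. c i * c j * inner (Qt ! j) (Qt ! i))"
    by (simp add: power2_norm_eq_inner inner_sum_left inner_sum_right sum_distrib_left mult_ac)
  also have "\<dots> = (\<Sum>i<?n. \<Sum>j<?n. if i = j then (c i)\<^sup>2 else 0)"
    using assms unfolding orthonormal_list_def by (intro sum.cong refl) (auto simp: power2_eq_square)
  finally show ?thesis by simp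
qed

lemma lower_frame_bound_scaled_orthonormal:
  assumes "orthonormal_list Qt" "0 \<le> d"
  shows "lower_frame_bound d (map (scaleR d) Qt)"
  unfolding lower_frame_bound_def
proof
  fix c :: "nat \<Rightarrow> real"
  have "(\<Sum>i<length Qt. c i *\<^sub>R map (scaleR d) Qt ! i) = d *\<^sub>R (\<Sum>i<length Qt. c i *\<^sub>R Qt ! i)"
    by (simp add: scaleR_sum_right mult.commute)
  moreover have "norm (\<Sum>i<length Qt. c i *\<^sub>R Qt ! i) = sqrt (\<Sum>i<length Qt. (c i)\<^sup>2)"
    using real_sqrt_unique[OF norm_orthonormal_list_combination[OF assms(1)] norm_ge_zero] by simp
  ultimately show "d * sqrt (\<Sum>i<length (map (scaleR d) Qt). (c i)\<^sup>2)
      \<le> norm (\<Sum>i<length (map (scaleR d) Qt). c i *\<^sub>R map (scaleR d) Qt ! i)"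
    using assms(2) by simp
qed

lemma sum_lessThan_append:
  fixes F :: "nat \<Rightarrow> 'a \<Rightarrow> 'b::comm_monoid_add"
  shows "(\<Sum>i<length (a @ b). F i ((a @ b) ! i))
       = (\<Sum>i<length a. F i (a ! i)) + (\<Sum>i<length b. F (length a + i) (b ! i))"
proof -
  have "(\<Sum>i<length a + n. G i) = (\<Sum>i<length a. G i) + (\<Sum>i<n. G (length a + i))"
    for n and G :: "nat \<Rightarrow> 'b"
    by (induction n) (simp_all add: add.assoc)
  then show ?thesis by (simp add: nth_append)
qed

lemma lower_frame_bound_append_orthogonal:
  fixes a b :: "('a::real_inner) list"
  assumes a: "lower_frame_bound s a" and b: "lower_frame_bound t b"
    and orth: "\<forall>y\<in>set a. \<forall>z\<in>set b. inner y z = 0"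
    and nonneg: "0 \<le> s" "0 \<le> t"
  shows "lower_frame_bound (min s t) (a @ b)"
  unfolding lower_frame_bound_def
proof
  fix c :: "nat \<Rightarrow> real"
  define A where "A = (\<Sum>i<length a. c i *\<^sub>R a ! i)"
  define B where "B = (\<Sum>i<length b. c (length a + i) *\<^sub>R b ! i)"
  define S where "S = (\<Sum>i<length a. (c i)\<^sup>2)"
  define T where "T = (\<Sum>i<length b. (c (length a + i))\<^sup>2)"
  have "inner A B = 0"
    unfolding A_def B_def using orth by (simp add: inner_sum_left inner_sum_right)
  then have pythagoras: "(norm (A + B))\<^sup>2 = (norm A)\<^sup>2 + (norm B)\<^sup>2"
    by (simp add: power2_norm_eq_inner inner_add_left inner_add_right inner_commute)
  have "s * sqrt S \<le> norm A" "t * sqrt T \<le> norm B"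
    using a[unfolded lower_frame_bound_def, rule_format, of c]
      b[unfolded lower_frame_bound_def, rule_format, of "\<lambda>i. c (length a + i)"]
    by (simp_all add: A_def B_def S_def T_def)
  moreover have "0 \<le> S" "0 \<le> T" by (simp_all add: S_def T_def sum_nonneg)
  moreover have "(min s t)\<^sup>2 * X \<le> (norm Y)\<^sup>2"
    if "u * sqrt X \<le> norm Y" "0 \<le> X" "min s t \<le> u" for u X and Y :: 'a
  proof -
    have "(min s t)\<^sup>2 * X \<le> u\<^sup>2 * X" using that nonneg by (intro mult_right_mono power_mono) auto
    also have "\<dots> = (u * sqrt X)\<^sup>2" using that by (simp add: power_mult_distrib)
    also have "\<dots> \<le> (norm Y)\<^sup>2" using that nonneg by (intro power_mono) auto
    finally show ?thesis .
  qed
  ultimately have "(min s t)\<^sup>2 * S \<le> (norm A)\<^sup>2" "(min s t)\<^sup>2 * T \<le> (norm B)\<^sup>2"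
    by auto
  then have "(min s t * sqrt (S + T))\<^sup>2 \<le> (norm (A + B))\<^sup>2"
    using \<open>0 \<le> S\<close> \<open>0 \<le> T\<close> pythagoras by (simp add: power_mult_distrib distrib_left)
  then have "min s t * sqrt (S + T) \<le> norm (A + B)"
    by (rule power2_le_imp_le) simp
  then show "min s t * sqrt (\<Sum>i<length (a @ b). (c i)\<^sup>2) \<le> norm (\<Sum>i<length (a @ b). c i *\<^sub>R (a @ b) ! i)"
    using sum_lessThan_append[of "\<lambda>i v. c i *\<^sub>R v" a b] sum_lessThan_append[of "\<lambda>i v. (c i)\<^sup>2" a b]
    by (simp add: A_def B_def S_def T_def)
qed

lemma cols_are_mult_vec:
  fixes D :: "real^'p^'n"
  assumes "cols_are D cs"
  obtains c where "D *v v = (\<Sum>i<length cs. c i *\<^sub>R cs ! i)" "(\<Sum>i<length cs. (c i)\<^sup>2) = (norm v)\<^sup>2"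
proof -
  obtain e :: "'p \<Rightarrow> nat" where e: "bij_betw e UNIV {..<length cs}" "\<forall>j. column j D = cs ! e j"
    using assms unfolding cols_are_def by blast
  define c where "c i = v $ inv_into UNIV e i" for i
  have ce: "c (e j) = v $ j" for j
    unfolding c_def using e(1) by (simp add: bij_betw_def inv_into_f_f)
  have "D *v v = (\<Sum>j\<in>UNIV. c (e j) *\<^sub>R cs ! e j)"
    by (simp add: matrix_mult_sum scalar_mult_eq_scaleR ce e(2))
  also have "\<dots> = (\<Sum>i<length cs. c i *\<^sub>R cs ! i)"
    by (rule sum.reindex_bij_betw[OF e(1)])
  finally have "D *v v = (\<Sum>i<length cs. c i *\<^sub>R cs ! i)" .
  moreover have "(norm v)\<^sup>2 = (\<Sum>j\<in>UNIV. v $ j * v $ j)"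
    by (simp only: power2_norm_eq_inner inner_vec_def inner_real_def)
  then have "(norm v)\<^sup>2 = (\<Sum>j\<in>UNIV. (c (e j))\<^sup>2)"
    by (simp add: ce power2_eq_square)
  then have "(norm v)\<^sup>2 = (\<Sum>i<length cs. (c i)\<^sup>2)"
    using sum.reindex_bij_betw[OF e(1), of "\<lambda>i. (c i)\<^sup>2"] by simp
  ultimately show ?thesis using that by simp
qed

lemma cols_are_column_mem: "cols_are D cs \<Longrightarrow> column j D \<in> set cs"
  unfolding cols_are_def by (metis bij_betw_apply UNIV_I lessThan_iff nth_mem)

lemma cols_are_lower_frame_bound:
  fixes D :: "real^'p^'n"
  assumes "cols_are D cs" "lower_frame_bound s cs"
  shows "s * norm v \<le> norm (D *v v)"
proof -
  obtain c where "D *v v = (\<Sum>i<length cs. c i *\<^sub>R cs ! i)" "(\<Sum>i<length cs. (c i)\<^sup>2) = (norm v)\<^sup>2"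
    using cols_are_mult_vec[OF assms(1)] .
  then show ?thesis
    using assms(2)[unfolded lower_frame_bound_def, rule_format, of c] by simp
qed

lemma inner_orthonormal_residual:
  fixes U :: "('a::real_inner) list"
  assumes "orthonormal_list U" "u \<in> set U"
  shows "inner u (w - (\<Sum>v\<leftarrow>U. inner v w *\<^sub>R v)) = 0"
proof -
  obtain k where k: "k < length U" "u = U ! k" using assms(2) by (metis in_set_conv_nth)
  have "inner u (\<Sum>v\<leftarrow>U. inner v w *\<^sub>R v) = (\<Sum>l<length U. inner (U ! l) w * inner (U ! k) (U ! l))"
    by (simp add: sum_list_sum_nth atLeast0LessThan inner_sum_right k)
  also have "\<dots> = (\<Sum>l<length U. if l = k then inner (U ! k) w else 0)"
    using assms(1) k unfolding orthonormal_list_def by (intro sum.cong refl) auto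
  finally show ?thesis using k by (simp add: inner_diff_right)
qed

lemma gen_orthonormal_orthogonal:
  assumes "gen q \<Delta> U out" "orthonormal_list U"
  obtains Qt where "out = map (scaleR \<Delta>) Qt" "orthonormal_list Qt"
    "\<forall>y\<in>span (set U). \<forall>z\<in>set Qt. inner y z = 0"
proof -
  obtain A Qt Rt where g: "length Qt = q" "orthonormal_list Qt" "sq_invertible q Rt"
    "\<forall>j<q. A ! j - (\<Sum>u\<leftarrow>U. inner u (A ! j) *\<^sub>R u) = (\<Sum>i<q. Rt i j *\<^sub>R Qt ! i)"
    "out = map (scaleR \<Delta>) Qt"
    using assms(1) unfolding gen_def by blast
  obtain Ri where Ri: "\<forall>i<q. \<forall>j<q. (\<Sum>l<q. Rt i l * Ri l j) = (if i = j then 1 else 0)"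
    using g(3) unfolding sq_invertible_def by blast
  define w where "w j = A ! j - (\<Sum>u\<leftarrow>U. inner u (A ! j) *\<^sub>R u)" for j
  have Qt_w: "Qt ! m = (\<Sum>j<q. Ri j m *\<^sub>R w j)" if m: "m < q" for m
  proof -
    have "(\<Sum>j<q. Ri j m *\<^sub>R w j) = (\<Sum>j<q. \<Sum>i<q. (Rt i j * Ri j m) *\<^sub>R Qt ! i)"
      using g(4) by (simp add: w_def scaleR_sum_right mult.commute)
    also have "\<dots> = (\<Sum>i<q. (\<Sum>j<q. Rt i j * Ri j m) *\<^sub>R Qt ! i)"
      by (subst sum.swap) (simp add: scaleR_sum_left)
    also have "\<dots> = Qt ! m"
      using Ri m by (simp add: if_distrib[of "\<lambda>a. a *\<^sub>R _"] sum.delta cong: if_cong)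
    finally show ?thesis by simp
  qed
  have "\<forall>y\<in>span (set U). \<forall>z\<in>set Qt. inner y z = 0"
  proof (intro ballI)
    fix y z assume y: "y \<in> span (set U)" and z: "z \<in> set Qt"
    obtain m where m: "m < q" "z = Qt ! m" using z g(1) by (metis in_set_conv_nth)
    have "orthogonal z y"
    proof (rule orthogonal_to_span[OF y])
      fix u assume "u \<in> set U"
      then have "inner u z = 0"
        using inner_orthonormal_residual[OF assms(2)]
        by (simp add: m Qt_w inner_sum_right w_def)
      then show "orthogonal z u" by (simp add: orthogonal_def inner_commute)
    qed
    then show "inner y z = 0" by (simp add: orthogonal_def inner_commute)
  qed
  with g that show ?thesis by blast
qed

section \<open>Poisedness of the direction matrices\<close>

text \<open>Since \<open>|D v| = |R v|\<close> for \<open>D = Q R\<close>, the second clause says \<open>\<parallel>(R / r)\<^sup>-\<^sup>1\<parallel> \<le> M\<close>; for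
  \<open>r = \<epsilon>rad \<Delta>\<close> this is the paper's bound \<open>M\<close> on the inverse of the scaled \<open>R\<close>.\<close>

definition poised :: "real \<Rightarrow> real \<Rightarrow> real^'p^'n \<Rightarrow> bool" where
  "poised M r D \<longleftrightarrow> (\<forall>j. norm (column j D) \<le> r) \<and> (\<forall>v. r * norm v \<le> M * norm (D *v v))"

lemma poised_scaleR:
  assumes "poised M r D" "0 < \<gamma>"
  shows "poised M (\<gamma> * r) (\<gamma> *\<^sub>R D)"
proof -
  have "column j (\<gamma> *\<^sub>R D) = \<gamma> *\<^sub>R column j D" for j
    by (simp add: vec_eq_iff column_def)
  moreover have "(\<gamma> *\<^sub>R D) *v v = \<gamma> *\<^sub>R (D *v v)" for v
    by (simp add: scaleR_matrix_vector_assoc)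
  ultimately show ?thesis
    using assms unfolding poised_def by (simp add: mult.left_commute[of _ \<gamma>])
qed

lemma poised_of_cols_are:
  fixes D :: "real^'p^'n"
  assumes "cols_are D cs" "lower_frame_bound s cs" "\<forall>c\<in>set cs. norm c \<le> r" "r \<le> M * s" "0 \<le> M"
  shows "poised M r D"
  unfolding poised_def
proof (intro conjI allI)
  show "norm (column j D) \<le> r" for j
    using assms(1,3) cols_are_column_mem by blast
  fix v :: "real^'p"
  have "r * norm v \<le> M * s * norm v"
    using assms(4) by (simp add: mult_right_mono)
  also have "\<dots> \<le> M * norm (D *v v)"
    using cols_are_lower_frame_bound[OF assms(1,2)] assms(5) by (simp add: mult.assoc mult_left_mono)
  finally show "r * norm v \<le> M * norm (D *v v)" .
qed

lemma poised_of_gen: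
  fixes D :: "real^'p^'n"
  assumes cols: "cols_are D (DU @ DR)" and gen: "gen q \<Delta> U DR" and U: "orthonormal_list U"
    and span: "set DU \<subseteq> span (set U)" and frame: "lower_frame_bound \<epsilon>geo DU"
    and short: "\<forall>d\<in>set DU. norm d \<le> \<epsilon>rad * \<Delta>"
    and \<Delta>: "0 < \<Delta>" and \<epsilon>: "1 \<le> \<epsilon>rad" "0 \<le> \<epsilon>geo"
    and M: "\<epsilon>rad * \<Delta> \<le> M * min \<epsilon>geo \<Delta>" "0 \<le> M"
  shows "poised M (\<epsilon>rad * \<Delta>) D"
proof -
  obtain Qt where DR: "DR = map (scaleR \<Delta>) Qt" "orthonormal_list Qt"
    and orth: "\<forall>y\<in>span (set U). \<forall>z\<in>set Qt. inner y z = 0"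
    using gen U by (rule gen_orthonormal_orthogonal)
  show ?thesis
  proof (rule poised_of_cols_are[OF cols _ _ M])
    show "lower_frame_bound (min \<epsilon>geo \<Delta>) (DU @ DR)"
      unfolding DR(1) using frame orth span \<epsilon> \<Delta>
      by (intro lower_frame_bound_append_orthogonal lower_frame_bound_scaled_orthonormal DR(2)) auto
    show "\<forall>c\<in>set (DU @ DR). norm c \<le> \<epsilon>rad * \<Delta>"
      using short DR \<Delta> \<epsilon> by (auto simp: in_set_conv_nth norm_orthonormal_list_nth)
  qed
qed

lemma poised_rebuild:
  fixes D :: "real^'p^'n"
  assumes kept: "remove_while \<epsilon>geo \<Delta> (filter (\<lambda>d. norm d \<le> \<epsilon>rad * \<Delta>) DU1) DU2"
      "remove_rel \<Delta> r DU2 DU3"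
    and U: "orthonormal_list U" "span (set U) = span (set DU3)"
    and gen: "gen q \<Delta> U DR" and cols: "cols_are D (DU3 @ DR)"
    and \<Delta>: "0 < \<Delta>" and \<epsilon>: "1 \<le> \<epsilon>rad" "0 \<le> \<epsilon>geo"
    and M: "\<epsilon>rad * \<Delta> \<le> M * min \<epsilon>geo \<Delta>" "0 \<le> M"
  shows "poised M (\<epsilon>rad * \<Delta>) D"
proof -
  have DU2: "set DU2 \<subseteq> {d \<in> set DU1. norm d \<le> \<epsilon>rad * \<Delta>}" "lower_frame_bound \<epsilon>geo DU2"
    using remove_while_lower_frame_bound[OF kept(1)] by auto
  have DU3: "set DU3 \<subseteq> set DU2" "lower_frame_bound \<epsilon>geo DU3"
    using remove_rel_lower_frame_bound[OF kept(2)] DU2(2) by auto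
  show ?thesis
  proof (rule poised_of_gen[OF cols gen U(1) _ DU3(2) _ \<Delta> \<epsilon> M])
    show "set DU3 \<subseteq> span (set U)" using U(2) span_superset by blast
    show "\<forall>d\<in>set DU3. norm d \<le> \<epsilon>rad * \<Delta>" using DU2(1) DU3(1) by auto
  qed
qed

lemma radius_le_conditioning_min:
  fixes \<epsilon>rad \<epsilon>geo \<Delta>min \<Delta>max \<delta> :: real
  assumes "0 < \<epsilon>geo" "0 < \<Delta>min" "\<Delta>min \<le> \<Delta>max" "0 \<le> \<epsilon>rad" "0 \<le> \<delta>" "\<delta> \<le> \<Delta>max"
  shows "\<epsilon>rad * \<delta> \<le> max (1 / \<epsilon>geo) (1 / \<Delta>min) * \<epsilon>rad * \<Delta>max * min \<epsilon>geo \<delta>"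
proof -
  have "\<epsilon>rad * \<delta> \<le> (1 / \<epsilon>geo) * \<epsilon>rad * \<Delta>max * \<epsilon>geo"
    using assms by (simp add: mult_left_mono)
  also have "\<dots> \<le> max (1 / \<epsilon>geo) (1 / \<Delta>min) * \<epsilon>rad * \<Delta>max * \<epsilon>geo"
    using assms by (intro mult_right_mono) auto
  finally have "\<epsilon>rad * \<delta> \<le> max (1 / \<epsilon>geo) (1 / \<Delta>min) * \<epsilon>rad * \<Delta>max * \<epsilon>geo" .
  moreover have "\<epsilon>rad * \<delta> \<le> max (1 / \<epsilon>geo) (1 / \<Delta>min) * \<epsilon>rad * \<Delta>max * \<delta>"
  proof -
    have "\<epsilon>rad * \<delta> \<le> (1 / \<Delta>min) * \<epsilon>rad * \<Delta>max * \<delta>"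
      using assms by (simp add: field_simps, intro mult_right_mono) auto
    also have "\<dots> \<le> max (1 / \<epsilon>geo) (1 / \<Delta>min) * \<epsilon>rad * \<Delta>max * \<delta>"
      using assms by (intro mult_right_mono) auto
    finally show ?thesis .
  qed
  ultimately show ?thesis by (simp add: min_def)
qed

lemma clarsta_step_cases:
  fixes D D' :: "real^'p^'n"
  assumes "clarsta_step f C prand \<Delta>max \<gamma>dec \<gamma>inc \<eta>1 \<eta>2 \<mu> \<epsilon>rad \<epsilon>geo \<Delta>min k x \<Delta> D x' \<Delta>' D'"
  obtains (criticality) "\<Delta>' = \<gamma>dec * \<Delta>" "D' = \<gamma>dec *\<^sub>R D"
  | (trust_region) DU1 DU2 DU3 U DR r where "\<Delta>' \<in> {\<gamma>dec * \<Delta>, min (\<gamma>inc k * \<Delta>) \<Delta>max, \<Delta>}"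
      "remove_while \<epsilon>geo \<Delta>' (filter (\<lambda>d. norm d \<le> \<epsilon>rad * \<Delta>') DU1) DU2"
      "remove_rel \<Delta>' r DU2 DU3" "orthonormal_list U" "span (set U) = span (set DU3)"
      "gen (CARD('p) - length DU3) \<Delta>' U DR" "cols_are D' (DU3 @ DR)"
  using assms unfolding clarsta_step_def Let_def
  by (elim exE conjE, simp only: if_split_asm) blast

lemma clarsta_iter_poised:
  fixes D :: "real^'p^'n"
  assumes iter: "clarsta_iter f C prand x0 \<Delta>0 \<Delta>min \<Delta>max \<gamma>dec \<gamma>inc \<eta>1 \<eta>2 \<mu> \<epsilon>rad \<epsilon>geo k x \<Delta> D"
    and \<Delta>0: "0 < \<Delta>0" "\<Delta>0 \<le> \<Delta>max" and \<Delta>min: "0 < \<Delta>min" "\<Delta>min \<le> \<Delta>max"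
    and \<gamma>dec: "0 < \<gamma>dec" "\<gamma>dec < 1" and \<epsilon>: "1 \<le> \<epsilon>rad" "0 < \<epsilon>geo"
  shows "0 < \<Delta> \<and> \<Delta> \<le> \<Delta>max \<and> poised (max (1 / \<epsilon>geo) (1 / \<Delta>min) * \<epsilon>rad * \<Delta>max) (\<epsilon>rad * \<Delta>) D"
proof -
  define M where "M = max (1 / \<epsilon>geo) (1 / \<Delta>min) * \<epsilon>rad * \<Delta>max"
  have M0: "0 \<le> M"
    unfolding M_def using \<epsilon> \<Delta>min by (simp add: le_max_iff_disj)
  \<comment> \<open>valid for every \<open>\<delta> \<le> \<Delta>max\<close>, in particular for \<open>\<Delta>0\<close>, which may lie below \<open>\<Delta>min\<close>\<close>
  have M: "\<epsilon>rad * \<delta> \<le> M * min \<epsilon>geo \<delta>" if "0 \<le> \<delta>" "\<delta> \<le> \<Delta>max" for \<delta>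
    unfolding M_def using that \<epsilon> \<Delta>min by (intro radius_le_conditioning_min) auto
  have "0 < \<Delta> \<and> \<Delta> \<le> \<Delta>max \<and> poised M (\<epsilon>rad * \<Delta>) D"
    using iter
  proof induction
    case (init cs D0)
    have "poised M (\<epsilon>rad * \<Delta>0) D0"
      using init M[of \<Delta>0] \<Delta>0 \<epsilon> M0
      by (intro poised_of_gen[of D0 "[]" cs _ \<Delta>0 "[]"]) (auto simp: orthonormal_list_def)
    then show ?case using \<Delta>0 by simp
  next
    case (step k x \<Delta> D x' \<Delta>' D')
    have "\<gamma>dec * \<Delta> \<le> 1 * \<Delta>" using step.IH \<gamma>dec by (intro mult_right_mono) auto
    then have shrink: "\<gamma>dec * \<Delta> \<le> \<Delta>max" using step.IH by linarith
    from step.hyps(2) show ?case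
    proof (cases rule: clarsta_step_cases)
      case criticality
      then show ?thesis
        using step.IH poised_scaleR[of M "\<epsilon>rad * \<Delta>" D \<gamma>dec] \<gamma>dec shrink
        by (simp add: mult.left_commute)
    next
      case (trust_region DU1 DU2 DU3 U DR r)
      have pos: "0 < \<Delta>'" using step.hyps(2) \<Delta>min unfolding clarsta_step_def by auto
      have le_max: "\<Delta>' \<le> \<Delta>max" using trust_region(1) step.IH shrink by auto
      have "poised M (\<epsilon>rad * \<Delta>') D'"
        by (rule poised_rebuild[OF trust_region(2-7)]) (use pos \<epsilon> M[of \<Delta>'] le_max M0 in auto)
      then show ?thesis using pos le_max by simp
    qed
  qed
  then show ?thesis unfolding M_def .
qed

section \<open>Fully linear simplex-gradient models\<close>

lemma inner_matrix_vector_transpose: "inner (A *v x) y = inner x (transpose A *v y)"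
  for A :: "real^'m^'k"
proof -
  have "inner x (transpose A *v y) = inner (y v* A) x" by (simp add: inner_commute)
  also have "\<dots> = inner y (A *v x)" by (rule dot_lmul_matrix)
  finally show ?thesis by (simp add: inner_commute)
qed

lemma matrix_inv_right: "invertible (A::real^'m^'m) \<Longrightarrow> A ** matrix_inv A = mat 1"
  unfolding matrix_inv_def invertible_def by (rule someI2_ex) auto

lemma transpose_matrix_vector_nth: "(transpose A *v y) $ i = inner (column i A) y"
  for A :: "real^'m^'k"
  by (simp add: matrix_vector_mult_def transpose_def column_def inner_vec_def mult.commute)

lemma column_matrix_matrix_mult: "column i (Q ** R) = Q *v column i R"
  for Q :: "real^'m^'k" and R :: "real^'p^'m"
  by (simp add: vec_eq_iff matrix_matrix_mult_def matrix_vector_mult_def column_def)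

lemma norm_isometry_matrix_vector:
  fixes Q :: "real^'p^'n"
  assumes "transpose Q ** Q = mat 1"
  shows "norm (Q *v v) = norm v"
proof -
  have "(norm (Q *v v))\<^sup>2 = inner v (transpose Q *v (Q *v v))"
    by (simp add: power2_norm_eq_inner inner_matrix_vector_transpose)
  also have "\<dots> = (norm v)\<^sup>2"
    by (simp add: matrix_vector_mul_assoc assms power2_norm_eq_inner)
  finally show ?thesis by (simp add: power2_eq_iff_nonneg)
qed

lemma norm_le_sqrt_card_mult:
  fixes e :: "real^'m"
  assumes "\<And>i. \<bar>e $ i\<bar> \<le> B"
  shows "norm e \<le> sqrt (real CARD('m)) * B"
proof (rule power2_le_imp_le)
  have "(norm e)\<^sup>2 = (\<Sum>i\<in>UNIV. e $ i * e $ i)"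
    by (simp only: power2_norm_eq_inner inner_vec_def inner_real_def)
  also have "\<dots> = (\<Sum>i\<in>UNIV. \<bar>e $ i\<bar>\<^sup>2)"
    by (simp add: power2_eq_square)
  also have "\<dots> \<le> (\<Sum>i\<in>(UNIV::'m set). B\<^sup>2)"
    using assms by (intro sum_mono power_mono) auto
  finally show "(norm e)\<^sup>2 \<le> (sqrt (real CARD('m)) * B)\<^sup>2"
    by (simp add: power_mult_distrib)
  show "0 \<le> sqrt (real CARD('m)) * B"
    using assms[of undefined] by simp
qed

lemma model_grad_residual:
  assumes "is_QR D Q R"
  shows "(transpose R *v (model_grad f x Q R - transpose Q *v f' x)) $ i
           = f (x + column i D) - f x - inner (f' x) (column i D)"
proof -
  have D: "D = Q ** R" and "invertible R" using assms unfolding is_QR_def by auto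
  then have "transpose R *v model_grad f x Q R = model_delta f x Q R"
    unfolding model_grad_def
    by (simp only: matrix_vector_mul_assoc matrix_inv_right transpose_invertible matrix_vector_mul_lid)
  then have "transpose R *v (model_grad f x Q R - transpose Q *v f' x) = model_delta f x Q R - transpose D *v f' x"
    by (simp only: matrix_vector_mult_diff_distrib D matrix_transpose_mul matrix_vector_mul_assoc)
  then have "(transpose R *v (model_grad f x Q R - transpose Q *v f' x)) $ i
      = model_delta f x Q R $ i - (transpose D *v f' x) $ i"
    by (simp only: vector_minus_component)
  also have "\<dots> = f (x + column i D) - f x - inner (f' x) (column i D)"
    unfolding transpose_matrix_vector_nth model_delta_def D column_matrix_matrix_mult
    by (simp add: inner_commute)
  finally show ?thesis .
qed

lemma poised_transpose_inverse_bound: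
  fixes D Q :: "real^'p^'n" and R :: "real^'p^'p"
  assumes QR: "is_QR D Q R" and poised: "poised M r D" and r: "0 < r" and M: "0 \<le> M"
  shows "r * norm h \<le> M * norm (transpose R *v h)"
proof (cases "h = 0")
  case False
  have D: "D = Q ** R" and QQ: "transpose Q ** Q = mat 1" and "invertible R"
    using QR unfolding is_QR_def by auto
  define v where "v = matrix_inv R *v h"
  have Rv: "R *v v = h"
    using \<open>invertible R\<close> by (simp add: v_def matrix_vector_mul_assoc matrix_inv_right)
  have "(norm h)\<^sup>2 = inner (R *v v) h"
    by (simp add: Rv power2_norm_eq_inner)
  also have "\<dots> = inner v (transpose R *v h)"
    by (rule inner_matrix_vector_transpose)
  also have "\<dots> \<le> norm v * norm (transpose R *v h)"
    by (rule norm_cauchy_schwarz)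
  finally have "r * (norm h)\<^sup>2 \<le> r * norm v * norm (transpose R *v h)"
    using r by (simp add: mult.assoc mult_left_mono)
  also have "\<dots> \<le> M * norm (D *v v) * norm (transpose R *v h)"
    using poised unfolding poised_def by (simp add: mult_right_mono)
  also have "norm (D *v v) = norm h"
    by (simp add: D Rv norm_isometry_matrix_vector[OF QQ] flip: matrix_vector_mul_assoc)
  finally have "(r * norm h) * norm h \<le> (M * norm (transpose R *v h)) * norm h"
    by (simp add: power2_eq_square mult_ac)
  then show ?thesis using False by simp
qed (simp add: M)

lemma model_grad_error:
  fixes f :: "real^'n \<Rightarrow> real" and D Q :: "real^'p^'n" and R :: "real^'p^'p"
  assumes grad: "\<And>y. (f has_derivative (\<lambda>h. inner (f' y) h)) (at y)"
    and lip: "L-lipschitz_on UNIV f'"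
    and QR: "is_QR D Q R" and poised: "poised M r D" and r: "0 < r" and M: "0 \<le> M"
  shows "norm (model_grad f x Q R - transpose Q *v f' x) \<le> sqrt (real CARD('p)) * M * (L / 2) * r"
proof -
  define h where "h = model_grad f x Q R - transpose Q *v f' x"
  have "\<bar>(transpose R *v h) $ i\<bar> \<le> L / 2 * r\<^sup>2" for i
  proof -
    have "\<bar>(transpose R *v h) $ i\<bar> \<le> L / 2 * (norm (column i D))\<^sup>2"
      unfolding h_def model_grad_residual[OF QR] by (rule lipschitz_gradient_taylor_bound[OF grad lip])
    also have "\<dots> \<le> L / 2 * r\<^sup>2"
      using poised lipschitz_on_nonneg[OF lip] unfolding poised_def
      by (intro mult_left_mono power_mono) auto
    finally show ?thesis .
  qed
  then have "norm (transpose R *v h) \<le> sqrt (real CARD('p)) * (L / 2 * r\<^sup>2)"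
    by (rule norm_le_sqrt_card_mult)
  then have "M * norm (transpose R *v h) \<le> M * (sqrt (real CARD('p)) * (L / 2 * r\<^sup>2))"
    using M by (rule mult_left_mono)
  with poised_transpose_inverse_bound[OF QR poised r M, of h]
  have "r * norm h \<le> r * (sqrt (real CARD('p)) * M * (L / 2) * r)"
    by (simp add: power2_eq_square mult_ac)
  then show ?thesis using r by (simp add: h_def)
qed

lemma model_value_error:
  fixes f :: "real^'n \<Rightarrow> real" and Q :: "real^'p^'n"
  assumes grad: "\<And>y. (f has_derivative (\<lambda>h. inner (f' y) h)) (at y)"
    and lip: "L-lipschitz_on UNIV f'"
    and QQ: "transpose Q ** Q = mat 1"
    and H: "norm (model_grad f x Q R - transpose Q *v f' x) \<le> H" and sh: "norm sh \<le> \<Delta>"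
  shows "\<bar>f (x + Q *v sh) - model f x Q R sh\<bar> \<le> L / 2 * \<Delta>\<^sup>2 + H * \<Delta>"
proof -
  have "f (x + Q *v sh) - model f x Q R sh
      = (f (x + Q *v sh) - f x - inner (f' x) (Q *v sh)) - inner (model_grad f x Q R - transpose Q *v f' x) sh"
    by (simp add: model_def inner_diff_left dot_lmul_matrix)
  moreover have "\<bar>f (x + Q *v sh) - f x - inner (f' x) (Q *v sh)\<bar> \<le> L / 2 * \<Delta>\<^sup>2"
  proof -
    have "\<bar>f (x + Q *v sh) - f x - inner (f' x) (Q *v sh)\<bar> \<le> L / 2 * (norm sh)\<^sup>2"
      using lipschitz_gradient_taylor_bound[OF grad lip, of x "Q *v sh"]
      by (simp add: norm_isometry_matrix_vector[OF QQ])
    also have "\<dots> \<le> L / 2 * \<Delta>\<^sup>2"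
      using sh lipschitz_on_nonneg[OF lip] by (intro mult_left_mono power_mono) auto
    finally show ?thesis .
  qed
  moreover have "\<bar>inner (model_grad f x Q R - transpose Q *v f' x) sh\<bar> \<le> H * \<Delta>"
  proof -
    have "\<bar>inner (model_grad f x Q R - transpose Q *v f' x) sh\<bar>
        \<le> norm (model_grad f x Q R - transpose Q *v f' x) * norm sh"
      by (rule Cauchy_Schwarz_ineq2)
    also have "\<dots> \<le> H * \<Delta>"
      using H sh order_trans[OF norm_ge_zero H] by (intro mult_mono) auto
    finally show ?thesis .
  qed
  ultimately show ?thesis by linarith
qed

lemma model_gradient_error:
  fixes f :: "real^'n \<Rightarrow> real" and Q :: "real^'p^'n"
  assumes lip: "L-lipschitz_on UNIV f'"
    and QQ: "transpose Q ** Q = mat 1"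
    and H: "norm (model_grad f x Q R - transpose Q *v f' x) \<le> H" and sh: "norm sh \<le> \<Delta>"
    and d: "norm d \<le> 1"
  shows "\<bar>inner (transpose Q *v f' (x + Q *v sh) - model_grad f x Q R) d\<bar> \<le> L * \<Delta> + H"
proof -
  have "inner (transpose Q *v f' (x + Q *v sh) - model_grad f x Q R) d
      = inner (f' (x + Q *v sh) - f' x) (Q *v d) - inner (model_grad f x Q R - transpose Q *v f' x) d"
    by (simp add: inner_diff_left dot_lmul_matrix)
  moreover have "\<bar>inner (f' (x + Q *v sh) - f' x) (Q *v d)\<bar> \<le> L * \<Delta>"
  proof -
    have "\<bar>inner (f' (x + Q *v sh) - f' x) (Q *v d)\<bar> \<le> norm (f' (x + Q *v sh) - f' x) * norm (Q *v d)"
      by (rule Cauchy_Schwarz_ineq2)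
    also have "\<dots> \<le> (L * norm sh) * 1"
      using lipschitz_on_normD[OF lip, of "x + Q *v sh" x] lipschitz_on_nonneg[OF lip] d
      by (intro mult_mono) (simp_all add: norm_isometry_matrix_vector[OF QQ])
    also have "\<dots> \<le> L * \<Delta>"
      using sh lipschitz_on_nonneg[OF lip] by (simp add: mult_left_mono)
    finally show ?thesis .
  qed
  moreover have "\<bar>inner (model_grad f x Q R - transpose Q *v f' x) d\<bar> \<le> H * 1"
  proof -
    have "\<bar>inner (model_grad f x Q R - transpose Q *v f' x) d\<bar>
        \<le> norm (model_grad f x Q R - transpose Q *v f' x) * norm d"
      by (rule Cauchy_Schwarz_ineq2)
    also have "\<dots> \<le> H * 1"
      using H d order_trans[OF norm_ge_zero H] by (intro mult_mono) auto
    finally show ?thesis .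
  qed
  ultimately show ?thesis by linarith
qed

lemma model_fully_linear:
  fixes f :: "real^'n \<Rightarrow> real" and D Q :: "real^'p^'n" and R :: "real^'p^'p"
  assumes grad: "\<And>y. (f has_derivative (\<lambda>h. inner (f' y) h)) (at y)"
    and lip: "L-lipschitz_on UNIV f'"
    and QR: "is_QR D Q R" and poised: "poised M (\<epsilon>rad * \<Delta>) D"
    and \<Delta>: "0 < \<Delta>" and \<epsilon>rad: "1 \<le> \<epsilon>rad" and M: "0 \<le> M" and sh: "norm sh \<le> \<Delta>"
  shows "\<bar>f (x + Q *v sh) - model f x Q R sh\<bar>
           \<le> (1/2 * L * (1 + sqrt (real CARD('p)) * M)) * \<epsilon>rad\<^sup>2 * \<Delta>\<^sup>2"
    and "norm d \<le> 1 \<Longrightarrow> \<bar>inner (transpose Q *v f' (x + Q *v sh) - model_grad f x Q R) d\<bar>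
           \<le> (1/2 * L * (2 + sqrt (real CARD('p)) * M)) * \<epsilon>rad * \<Delta>"
proof -
  define H where "H = sqrt (real CARD('p)) * M * (L / 2) * (\<epsilon>rad * \<Delta>)"
  have QQ: "transpose Q ** Q = mat 1" using QR by (simp add: is_QR_def)
  have L: "0 \<le> L" using lip by (rule lipschitz_on_nonneg)
  have HM: "0 \<le> sqrt (real CARD('p)) * M * (L / 2) * \<Delta>"
    using M L \<Delta> by simp
  have err: "norm (model_grad f x Q R - transpose Q *v f' x) \<le> H"
    unfolding H_def using \<Delta> \<epsilon>rad by (intro model_grad_error[OF grad lip QR poised _ M]) simp
  have "\<bar>f (x + Q *v sh) - model f x Q R sh\<bar> \<le> L / 2 * \<Delta>\<^sup>2 * 1 + H * \<Delta>"
    using model_value_error[OF grad lip QQ err sh] by simp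
  also have "\<dots> \<le> L / 2 * \<Delta>\<^sup>2 * \<epsilon>rad\<^sup>2 + (sqrt (real CARD('p)) * M * (L / 2) * \<Delta>) * \<Delta> * \<epsilon>rad\<^sup>2"
  proof (rule add_mono)
    show "L / 2 * \<Delta>\<^sup>2 * 1 \<le> L / 2 * \<Delta>\<^sup>2 * \<epsilon>rad\<^sup>2"
      using L \<epsilon>rad by (intro mult_left_mono) (simp_all add: one_le_power)
    have "H * \<Delta> = (sqrt (real CARD('p)) * M * (L / 2) * \<Delta>) * \<Delta> * \<epsilon>rad"
      by (simp add: H_def mult_ac)
    also have "\<dots> \<le> (sqrt (real CARD('p)) * M * (L / 2) * \<Delta>) * \<Delta> * \<epsilon>rad\<^sup>2"
      using HM \<Delta> \<epsilon>rad by (intro mult_left_mono) (simp_all add: power2_eq_square)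
    finally show "H * \<Delta> \<le> (sqrt (real CARD('p)) * M * (L / 2) * \<Delta>) * \<Delta> * \<epsilon>rad\<^sup>2" .
  qed
  finally show "\<bar>f (x + Q *v sh) - model f x Q R sh\<bar>
      \<le> (1/2 * L * (1 + sqrt (real CARD('p)) * M)) * \<epsilon>rad\<^sup>2 * \<Delta>\<^sup>2"
    by (simp add: algebra_simps power2_eq_square)
  assume d: "norm d \<le> 1"
  have "\<bar>inner (transpose Q *v f' (x + Q *v sh) - model_grad f x Q R) d\<bar> \<le> L * \<Delta> * 1 + H"
    using model_gradient_error[OF lip QQ err sh d] by simp
  also have "\<dots> \<le> L * \<Delta> * \<epsilon>rad + H"
    using L \<Delta> \<epsilon>rad by (intro add_right_mono mult_left_mono) simp_all
  finally show "\<bar>inner (transpose Q *v f' (x + Q *v sh) - model_grad f x Q R) d\<bar>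
      \<le> (1/2 * L * (2 + sqrt (real CARD('p)) * M)) * \<epsilon>rad * \<Delta>"
    by (simp add: H_def algebra_simps)
qed

theorem mainTheorem6:
  fixes f :: "real^'n \<Rightarrow> real" and f' :: "real^'n \<Rightarrow> real^'n" and L :: real
    and C :: "(real^'n) set" and prand :: nat and x0 :: "real^'n"
    and \<Delta>0 \<Delta>min \<Delta>max \<gamma>dec \<eta>1 \<eta>2 \<mu> \<epsilon>rad \<epsilon>geo :: real and \<gamma>inc :: "nat \<Rightarrow> real"
    and k :: nat and x :: "real^'n" and \<Delta> :: real and D :: "real^'p^'n"
  assumes grad: "\<And>y. (f has_derivative (\<lambda>h. inner (f' y) h)) (at y)"
    and lip: "L-lipschitz_on UNIV f'"
    and C: "closed C" "convex C" "interior C \<noteq> {}"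
    and dims: "1 \<le> prand" "prand \<le> CARD('p)" "CARD('p) \<le> CARD('n)"
    and x0: "x0 \<in> C"
    and Delta0: "0 < \<Delta>0" "\<Delta>0 \<le> \<Delta>max"
    and Deltas: "0 < \<Delta>min" "\<Delta>min \<le> \<Delta>max"
    and gdec: "0 < \<gamma>dec" "\<gamma>dec < 1"
    and ginc: "\<And>j. 1 \<le> \<gamma>inc j"
    and etas: "0 < \<eta>1" "\<eta>1 \<le> \<eta>2" "\<eta>2 < 1"
    and mu: "0 < \<mu>"
    and eps: "1 \<le> \<epsilon>rad" "0 < \<epsilon>geo"
    and iter: "clarsta_iter f C prand x0 \<Delta>0 \<Delta>min \<Delta>max \<gamma>dec \<gamma>inc \<eta>1 \<eta>2 \<mu> \<epsilon>rad \<epsilon>geo k x \<Delta> D"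
  shows "0 < \<Delta> \<and> \<Delta> \<le> \<Delta>max \<and>
    (let p = real CARD('p);
         M = max (1 / \<epsilon>geo) (1 / \<Delta>min) * \<epsilon>rad * \<Delta>max;
         \<kappa>ef = (1/2 * L * (1 + sqrt p * M)) * \<epsilon>rad\<^sup>2;
         \<kappa>eg = (1/2 * L * (2 + sqrt p * M)) * \<epsilon>rad
     in \<forall>Q R. is_QR D Q R \<longrightarrow>
          (\<forall>sh \<in> proj_set Q C x. norm sh \<le> \<Delta> \<longrightarrow>
             \<bar>f (x + Q *v sh) - model f x Q R sh\<bar> \<le> \<kappa>ef * \<Delta>\<^sup>2 \<and>
             (\<forall>d \<in> proj_set Q C x. norm d \<le> 1 \<longrightarrow>
                \<bar>inner (transpose Q *v f' (x + Q *v sh) - model_grad f x Q R) d\<bar> \<le> \<kappa>eg * \<Delta>)))"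
proof -
  define M where "M = max (1 / \<epsilon>geo) (1 / \<Delta>min) * \<epsilon>rad * \<Delta>max"
  have M: "0 \<le> M"
    unfolding M_def using eps Deltas by (simp add: le_max_iff_disj)
  have \<Delta>: "0 < \<Delta>" "\<Delta> \<le> \<Delta>max" and poised: "poised M (\<epsilon>rad * \<Delta>) D"
    using clarsta_iter_poised[OF iter Delta0 Deltas gdec eps] unfolding M_def by auto
  show ?thesis
    unfolding Let_def M_def[symmetric]
    using \<Delta> model_fully_linear[OF grad lip _ poised \<Delta>(1) eps(1) M] by blast
qed

end
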